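(* Let $(X_t)_{t\in\mathbb{Z}}$ be the second-order stationary process satisfying $a(L)(1-L)^{d_0}X_t=b(L)\epsilon_t$. Then almost surely $$\lim_{t\to\infty}\sup_{\theta\in\Theta_\kappa}|\epsilon_t(\theta)-\tilde\epsilon_t(\theta)|=0.$$
   Context: Model: $L$ is the backshift operator, $d_0\in(0,1/2)$, $(\epsilon_t)_{t\in\mathbb Z}$ is a sequence of uncorrelated random variables with mean $0$ and common variance $\sigma_\epsilon^2>0$, $a(L)=1-\sum_{i=1}^p a_iL^i$, $b(L)=1-\sum_{i=1}^q b_iL^i$ have all roots outside the closed unit disk and no common root; $(1-L)^{d}=\sum_{j\ge0}\alpha_j(d)L^j$ with $\alpha_j(d)=\Gamma(j-d)/\{\Gamma(j+1)\Gamma(-d)\}$. For $\theta=(\theta_1,\dots,\theta_{p+q},d)$: $a_\theta(z)=1-\sum_{i=1}^p\theta_iz^i$, $b_\theta(z)=1-\sum_{j=1}^q\theta_{p+j}z^j$. For $\kappa>0$, $\Theta^*_\kappa$ is the set of $(\theta_1,\dots,\theta_{p+q})$ such that all roots of $a_\theta,b_\theta$ have modulus $\ge1+\kappa$; $\Theta_\kappa=\Theta^*_\kappa\times[d_1,d_2]$ with $[d_1,d_2]\subset(0,1/2)$. $\epsilon_t(\theta)=\sum_{i\ge0}\gamma_i(\theta)X_{t-i}$ where $(\gamma_i(\theta))_{i\ge0}$ are the power-series coefficients of $b_\theta^{-1}(z)a_\theta(z)(1-z)^d$; the truncated version is $\tilde\epsilon_t(\theta)=\sum_{i=0}^{t-1}\gamma_i(\theta)X_{t-i}$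 for $t\ge1$. *)

theory Defs
  imports "HOL-Probability.Probability" "HOL-Computational_Algebra.Formal_Power_Series"
begin

text \<open>Coefficients of the fractional difference operator (1-L)^d = sum_j alpha_j(d) L^j.\<close>
definition frac_coef :: "real \<Rightarrow> nat \<Rightarrow> real" where
  "frac_coef d j = Gamma (real j - d) / (Gamma (real j + 1) * Gamma (- d))"

text \<open>A parameter theta = (theta_1,...,theta_{p+q}, d) is represented as a pair (th, d)
  where th is the list [theta_1, ..., theta_{p+q}] (so theta_i = th ! (i-1)).\<close>

definition a_theta :: "nat \<Rightarrow> real list \<Rightarrow> complex \<Rightarrow> complex" where
  "a_theta p th z = 1 - (\<Sum>i=1..p. complex_of_real (th ! (i - 1)) * z ^ i)"

definition b_theta :: "nat \<Rightarrow> nat \<Rightarrow> real list \<Rightarrow> complex \<Rightarrow> complex" where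
  "b_theta p q th z = 1 - (\<Sum>j=1..q. complex_of_real (th ! (p + j - 1)) * z ^ j)"

definition Theta_star :: "nat \<Rightarrow> nat \<Rightarrow> real \<Rightarrow> real list set" where
  "Theta_star p q \<kappa> = {th. length th = p + q \<and>
      (\<forall>z. a_theta p th z = 0 \<longrightarrow> norm z \<ge> 1 + \<kappa>) \<and>
      (\<forall>z. b_theta p q th z = 0 \<longrightarrow> norm z \<ge> 1 + \<kappa>)}"

definition Theta_kappa :: "nat \<Rightarrow> nat \<Rightarrow> real \<Rightarrow> real \<Rightarrow> real \<Rightarrow> (real list \<times> real) set" where
  "Theta_kappa p q \<kappa> d1 d2 = Theta_star p q \<kappa> \<times> {d1..d2}"

definition a_theta_fps :: "nat \<Rightarrow> real list \<Rightarrow> real fps" where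
  "a_theta_fps p th = Abs_fps (\<lambda>i. if i = 0 then 1 else if i \<le> p then - (th ! (i - 1)) else 0)"

definition b_theta_fps :: "nat \<Rightarrow> nat \<Rightarrow> real list \<Rightarrow> real fps" where
  "b_theta_fps p q th = Abs_fps (\<lambda>j. if j = 0 then 1 else if j \<le> q then - (th ! (p + j - 1)) else 0)"

definition frac_fps :: "real \<Rightarrow> real fps" where
  "frac_fps d = Abs_fps (frac_coef d)"

definition gamma_coef :: "nat \<Rightarrow> nat \<Rightarrow> real list \<times> real \<Rightarrow> nat \<Rightarrow> real" where
  "gamma_coef p q \<theta> i =
     fps_nth (inverse (b_theta_fps p q (fst \<theta>)) * a_theta_fps p (fst \<theta>) * frac_fps (snd \<theta>)) i"

definition eps_theta :: "nat \<Rightarrow> nat \<Rightarrow> (int \<Rightarrow> 'w \<Rightarrow> real) \<Rightarrow> int \<Rightarrow> real list \<times> real \<Rightarrow> 'w \<Rightarrow> real" where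
  "eps_theta p q X t \<theta> \<omega> = (\<Sum>i. gamma_coef p q \<theta> i * X (t - int i) \<omega>)"

definition eps_tilde :: "nat \<Rightarrow> nat \<Rightarrow> (int \<Rightarrow> 'w \<Rightarrow> real) \<Rightarrow> nat \<Rightarrow> real list \<times> real \<Rightarrow> 'w \<Rightarrow> real" where
  "eps_tilde p q X t \<theta> \<omega> = (\<Sum>i<t. gamma_coef p q \<theta> i * X (int t - int i) \<omega>)"

end

theory Submission
  imports Defs "HOL-Computational_Algebra.Fundamental_Theorem_Algebra" "HOL-Real_Asymp.Real_Asymp"
begin

text \<open>The coefficients \<open>\<gamma>\<^sub>i(\<theta>)\<close> are \<open>O((i + 1) powr -(1 + d1))\<close> uniformly on \<open>\<Theta>\<^sub>\<kappa>\<close>: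
  \<open>\<alpha>\<^sub>j(d) = O(j powr -(1 + d))\<close>, the coefficients of \<open>a\<^sub>\<theta>\<close> are bounded, and writing
  \<open>b\<^sub>\<theta>(z) = \<Prod> (1 - c z)\<close> with \<open>|c| \<le> 1/(1 + \<kappa>)\<close> shows that those of \<open>1/b\<^sub>\<theta>\<close> are
  \<open>O(n ^ q / (1 + \<kappa>) ^ n)\<close>; convolving with such sequences keeps the polynomial rate.
  So with \<open>c i = C (i + 1) powr -(1 + d1)\<close> the truncation error \<open>\<Sum>i\<ge>t. \<gamma>\<^sub>i(\<theta>) X(t - i)\<close> is
  bounded, uniformly in \<open>\<theta>\<close>, by \<open>R t = \<Sum>m. c (m + t) |X(-m)|\<close>. Stationarity bounds \<open>E |X t|\<close>,
  so \<open>R 0\<close> has finite expectation and is a.s. finite, and then \<open>R t \<longrightarrow> 0\<close> by dominated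
  convergence.\<close>

lemma not_Ints_between_0_1:
  fixes d :: real
  assumes "0 < d" "d < 1"
  shows "d \<notin> \<int>"
proof
  assume "d \<in> \<int>"
  then obtain k where "d = of_int k" by (auto elim: Ints_cases)
  with assms show False by simp
qed

lemma frac_coef_eq_pochhammer:
  assumes "d \<notin> \<int>"
  shows "frac_coef d j = pochhammer (- d) j / fact j"
proof -
  have "- d \<notin> \<int>\<^sub>\<le>\<^sub>0"
    using assms nonpos_Ints_subset_Ints by (metis Ints_minus minus_minus subsetD)
  then show ?thesis
    by (simp add: frac_coef_def pochhammer_Gamma Gamma_fact[symmetric] algebra_simps)
qed

lemma frac_coef_0: "d \<notin> \<int> \<Longrightarrow> frac_coef d 0 = 1"
  by (simp add: frac_coef_eq_pochhammer)

lemma frac_coef_Suc: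
  "d \<notin> \<int> \<Longrightarrow> frac_coef d (Suc j) = frac_coef d j * (real j - d) / (real j + 1)"
  by (simp add: frac_coef_eq_pochhammer pochhammer_Suc field_simps)

lemma powr_one_plus_times_one_minus_le:
  fixes x s :: real
  assumes "0 \<le> x" "s * x \<le> 1" "0 \<le> s"
  shows "(1 + x) powr s * (1 - s * x) \<le> 1"
proof -
  have "(1 + x) powr s = exp (s * ln (1 + x))" using assms by (simp add: powr_def)
  also have "\<dots> \<le> exp (s * x)"
    using ln_add_one_self_le_self[OF assms(1)] assms(3) by (simp add: mult_left_mono)
  finally have "(1 + x) powr s * (1 - s * x) \<le> exp (s * x) * exp (- (s * x))"
    using assms exp_ge_add_one_self[of "- (s * x)"] by (intro mult_mono) auto
  also have "\<dots> = 1" by (simp add: exp_minus)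
  finally show ?thesis .
qed

text \<open>The ratio \<open>|\<alpha>\<^sub>j\<^sub>+\<^sub>1(d)| / |\<alpha>\<^sub>j(d)| = 1 - (1 + d)/(j + 1)\<close> is dominated by
  \<open>((j + 1)/(j + 2))\<^sup>1\<^sup>+\<^sup>d\<^sup>1\<close>, so \<open>(j + 1)\<^sup>1\<^sup>+\<^sup>d\<^sup>1 |\<alpha>\<^sub>j(d)|\<close> is non-increasing for \<open>j \<ge> 1\<close>.\<close>
lemma frac_coef_decay:
  assumes d: "0 < d1" "d1 \<le> d" "d < 1"
  shows "\<bar>frac_coef d j\<bar> \<le> 4 * (real j + 1) powr (-(1 + d1))"
proof -
  define s where "s = 1 + d1"
  have s: "1 < s" "s \<le> 1 + d" "s < 2" using d by (auto simp: s_def)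
  have d_not_int: "d \<notin> \<int>" using d by (intro not_Ints_between_0_1) auto
  have scaled: "(real j + 1) powr s * \<bar>frac_coef d j\<bar> \<le> 4" if "j \<ge> 1" for j
    using that
  proof (induction j rule: dec_induct)
    case base
    have "frac_coef d 1 = - d"
      using frac_coef_Suc[OF d_not_int, of 0] frac_coef_0[OF d_not_int] by simp
    moreover have "(2::real) powr s \<le> 2 powr 2" using s by (intro powr_mono) auto
    ultimately have "(real 1 + 1) powr s * \<bar>frac_coef d 1\<bar> \<le> 4 * 1"
      using d by (intro mult_mono) auto
    then show ?case by simp
  next
    case (step j)
    define x where "x = 1 / (real j + 1)"
    have x: "0 \<le> x" "s * x \<le> 1" using step(1) s by (auto simp: x_def field_simps)
    have "real (Suc j) + 1 = (real j + 1) * (1 + x)" by (simp add: x_def field_simps)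
    then have grow: "(real (Suc j) + 1) powr s = (real j + 1) powr s * (1 + x) powr s"
      by (simp add: powr_mult)
    have shrink: "\<bar>frac_coef d (Suc j)\<bar> = \<bar>frac_coef d j\<bar> * ((real j - d) / (real j + 1))"
      using step(1) d by (simp add: frac_coef_Suc[OF d_not_int] abs_mult)
    have "(real j - d) / (real j + 1) \<le> 1 - s * x"
      using s mult_right_mono[of s "1 + d" "real j + 1"] by (simp add: x_def field_simps)
    moreover have "(real (Suc j) + 1) powr s * \<bar>frac_coef d (Suc j)\<bar>
        = ((real j + 1) powr s * \<bar>frac_coef d j\<bar>) * ((1 + x) powr s * ((real j - d) / (real j + 1)))"
      unfolding grow shrink by (simp add: algebra_simps)
    ultimately have "(real (Suc j) + 1) powr s * \<bar>frac_coef d (Suc j)\<bar>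
        \<le> ((real j + 1) powr s * \<bar>frac_coef d j\<bar>) * ((1 + x) powr s * (1 - s * x))"
      by (metis abs_ge_zero mult_left_mono powr_ge_zero zero_le_mult_iff)
    also have "\<dots> \<le> (real j + 1) powr s * \<bar>frac_coef d j\<bar>"
      using powr_one_plus_times_one_minus_le[OF x] s by (intro mult_left_le) auto
    finally show ?case using step by simp
  qed
  show ?thesis
  proof (cases "j = 0")
    case True
    then show ?thesis using frac_coef_0[OF d_not_int] by simp
  next
    case False
    then have "\<bar>frac_coef d j\<bar> \<le> 4 / (real j + 1) powr s"
      using scaled[of j] by (simp add: field_simps)
    then show ?thesis
      using powr_minus[of "real j + 1" "1 + d1"] by (simp add: s_def divide_inverse)
  qed
qed

definition recip_root_poly :: "complex list \<Rightarrow> complex poly" where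
  "recip_root_poly cs = prod_list (map (\<lambda>c. [:1, - c:]) cs)"

lemma recip_root_poly_Nil [simp]: "recip_root_poly [] = 1"
  by (simp add: recip_root_poly_def)

lemma recip_root_poly_Cons [simp]: "recip_root_poly (c # cs) = [:1, - c:] * recip_root_poly cs"
  by (simp add: recip_root_poly_def)

lemma recip_root_factorization:
  fixes P :: "complex poly"
  assumes "poly P 0 = 1" and "\<And>z. poly P z = 0 \<Longrightarrow> R \<le> norm z" and "R > 0"
  obtains cs where "P = recip_root_poly cs" "\<forall>c\<in>set cs. norm c \<le> 1 / R" "length cs = degree P"
  using assms
proof (induction "degree P" arbitrary: P thesis)
  case 0
  then obtain a where "P = [:a:]" by (metis degree_eq_zeroE)
  with 0 have "P = 1" by (simp add: one_pCons)
  with 0 show ?case by (metis degree_1 empty_iff list.set(1) list.size(3) recip_root_poly_Nil)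
next
  case (Suc n P)
  then obtain z where z: "poly P z = 0"
    using fundamental_theorem_of_algebra by (metis constant_degree nat.distinct(1))
  have z0: "z \<noteq> 0" using z Suc.prems(2) by auto
  from z obtain Q where Q: "P = [:- z, 1:] * Q" using poly_eq_0_iff_dvd by (metis dvdE)
  define Q' where "Q' = smult (- z) Q"
  have PQ': "P = [:1, - 1 / z:] * Q'" unfolding Q Q'_def using z0 by (simp add: field_simps)
  have "Q \<noteq> 0" using Q Suc.prems(2) by auto
  then have "degree P = Suc (degree Q')"
    using z0 unfolding Q Q'_def by (subst degree_mult_eq) auto
  moreover have "poly Q' 0 = 1" using Suc.prems(2) PQ' by simp
  moreover have "R \<le> norm w" if "poly Q' w = 0" for w
    using Suc.prems(3)[of w] that PQ' by simp
  ultimately obtain cs where cs: "Q' = recip_root_poly cs" "\<forall>c\<in>set cs. norm c \<le> 1 / R"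
      "length cs = degree Q'"
    using Suc.hyps Suc.prems(4) by (metis nat.inject)
  have "norm (1 / z) \<le> 1 / R"
    using Suc.prems(3)[OF z] Suc.prems(4) z0 by (simp add: norm_divide frac_le)
  then show ?case
    using Suc.prems(1)[of "(1 / z) # cs"] cs PQ' \<open>degree P = Suc (degree Q')\<close> by simp
qed

lemma inverse_one_minus_const_X:
  "inverse (fps_of_poly [:1, - c:]) = Abs_fps (\<lambda>n. (c::complex) ^ n)"
proof (rule fps_inverse_unique, rule fps_ext)
  fix n
  have linear: "fps_of_poly [:1, - c:] = 1 + fps_X * fps_const (- c)"
    by (simp add: fps_of_poly_pCons)
  show "fps_nth (fps_of_poly [:1, - c:] * Abs_fps ((^) c)) n = fps_nth 1 n"
    unfolding linear distrib_right mult.assoc by (cases n) (simp_all add: fps_X_mult_nth)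
qed

lemma norm_inverse_recip_root_poly_nth_le:
  assumes "\<forall>c\<in>set cs. norm c \<le> \<rho>" "0 \<le> \<rho>"
  shows "norm (fps_nth (inverse (fps_of_poly (recip_root_poly cs))) n)
           \<le> (real n + 1) ^ length cs * \<rho> ^ n"
  using assms(1)
proof (induction cs arbitrary: n)
  case Nil
  then show ?case using assms(2) by (cases n) simp_all
next
  case (Cons c cs)
  define F where "F = inverse (fps_of_poly (recip_root_poly cs))"
  have c: "norm c \<le> \<rho>" using Cons.prems by simp
  have term_le: "norm (c ^ i * fps_nth F (n - i)) \<le> (real n + 1) ^ length cs * \<rho> ^ n"
    if "i \<le> n" for i
  proof -
    have "norm (c ^ i * fps_nth F (n - i)) \<le> \<rho> ^ i * ((real (n - i) + 1) ^ length cs * \<rho> ^ (n - i))"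
      using Cons c assms(2) unfolding F_def norm_mult norm_power
      by (intro mult_mono power_mono) auto
    also have "\<dots> \<le> \<rho> ^ i * ((real n + 1) ^ length cs * \<rho> ^ (n - i))"
      using assms(2) by (intro mult_left_mono mult_right_mono power_mono) auto
    also have "\<dots> = (real n + 1) ^ length cs * \<rho> ^ n"
      using that by (simp add: power_add[symmetric])
    finally show ?thesis .
  qed
  have "inverse (fps_of_poly (recip_root_poly (c # cs))) = Abs_fps (\<lambda>n. c ^ n) * F"
    unfolding F_def recip_root_poly_Cons fps_of_poly_mult fps_inverse_mult inverse_one_minus_const_X ..
  then have "norm (fps_nth (inverse (fps_of_poly (recip_root_poly (c # cs)))) n)
      \<le> (\<Sum>i=0..n. norm (c ^ i * fps_nth F (n - i)))"
    by (simp add: fps_mult_nth norm_sum)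
  also have "\<dots> \<le> (\<Sum>i=0..n. (real n + 1) ^ length cs * \<rho> ^ n)"
    using term_le by (intro sum_mono) auto
  also have "\<dots> = (real n + 1) ^ length (c # cs) * \<rho> ^ n" by simp
  finally show ?case .
qed

lemma norm_coeff_recip_root_poly_le:
  assumes "\<forall>c\<in>set cs. norm c \<le> 1"
  shows "norm (coeff (recip_root_poly cs) n) \<le> 2 ^ length cs"
  using assms
proof (induction cs arbitrary: n)
  case Nil
  then show ?case by (cases n) simp_all
next
  case (Cons c cs)
  have IH: "norm (coeff (recip_root_poly cs) m) \<le> 2 ^ length cs" for m
    using Cons by simp
  have "recip_root_poly (c # cs) = recip_root_poly cs + pCons 0 (smult (- c) (recip_root_poly cs))"
    by (simp add: mult_pCons_left)
  then have "norm (coeff (recip_root_poly (c # cs)) n)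
      \<le> norm (coeff (recip_root_poly cs) n) + norm c * norm (coeff (recip_root_poly cs) (n - 1))"
    by (cases n) (simp_all, metis norm_mult norm_triangle_ineq4)
  also have "\<dots> \<le> 2 ^ length cs + 1 * 2 ^ length cs"
    using IH Cons.prems by (intro add_mono mult_mono) auto
  finally show ?case by simp
qed

definition complex_fps :: "real fps \<Rightarrow> complex fps" where
  "complex_fps f = Abs_fps (\<lambda>n. complex_of_real (fps_nth f n))"

lemma complex_fps_nth [simp]: "fps_nth (complex_fps f) n = complex_of_real (fps_nth f n)"
  by (simp add: complex_fps_def)

lemma complex_fps_mult: "complex_fps (f * g) = complex_fps f * complex_fps g"
  by (rule fps_ext) (simp add: fps_mult_nth)

lemma complex_fps_inverse:
  assumes "fps_nth f 0 \<noteq> 0"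
  shows "complex_fps (inverse f) = inverse (complex_fps f)"
proof (rule fps_inverse_unique[symmetric])
  have "complex_fps 1 = 1" by (rule fps_ext) simp
  then show "complex_fps f * complex_fps (inverse f) = 1"
    using inverse_mult_eq_1'[OF assms] by (simp flip: complex_fps_mult)
qed

definition lag_poly :: "real list \<Rightarrow> nat \<Rightarrow> nat \<Rightarrow> complex poly" where
  "lag_poly th k n = 1 - (\<Sum>j=1..n. monom (complex_of_real (th ! (k + j - 1))) j)"

lemma poly_lag_poly_a_theta: "poly (lag_poly th 0 p) z = a_theta p th z"
  by (simp add: lag_poly_def a_theta_def poly_sum poly_monom)

lemma poly_lag_poly_b_theta: "poly (lag_poly th p q) z = b_theta p q th z"
  by (simp add: lag_poly_def b_theta_def poly_sum poly_monom)

lemma degree_lag_poly: "degree (lag_poly th k n) \<le> n"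
  unfolding lag_poly_def
  by (intro degree_diff_le degree_sum_le) (auto intro: order_trans[OF degree_monom_le])

lemma coeff_lag_poly:
  "coeff (lag_poly th k n) i =
     (if i = 0 then 1 else if i \<le> n then - complex_of_real (th ! (k + i - 1)) else 0)"
proof -
  have "(\<Sum>j=1..n. coeff (monom (complex_of_real (th ! (k + j - 1))) j) i)
      = (if 1 \<le> i \<and> i \<le> n then complex_of_real (th ! (k + i - 1)) else 0)"
    by (simp add: coeff_monom sum.delta')
  then show ?thesis by (auto simp: lag_poly_def coeff_sum coeff_1)
qed

lemma complex_fps_a_theta_fps: "complex_fps (a_theta_fps p th) = fps_of_poly (lag_poly th 0 p)"
  by (rule fps_ext) (simp add: coeff_lag_poly a_theta_fps_def)

lemma complex_fps_b_theta_fps: "complex_fps (b_theta_fps p q th) = fps_of_poly (lag_poly th p q)"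
  by (rule fps_ext) (simp add: coeff_lag_poly b_theta_fps_def)

lemma lag_poly_recip_root_factorization:
  assumes "\<And>z. poly (lag_poly th k n) z = 0 \<Longrightarrow> 1 + \<kappa> \<le> norm z" and "\<kappa> > 0"
  obtains cs where "lag_poly th k n = recip_root_poly cs" "\<forall>c\<in>set cs. norm c \<le> 1 / (1 + \<kappa>)"
    "length cs \<le> n"
proof -
  have "poly (lag_poly th k n) 0 = 1" by (simp add: lag_poly_def poly_sum poly_monom)
  moreover have "1 + \<kappa> > 0" using assms(2) by simp
  ultimately obtain cs where "lag_poly th k n = recip_root_poly cs"
      "\<forall>c\<in>set cs. norm c \<le> 1 / (1 + \<kappa>)" "length cs = degree (lag_poly th k n)"
    using recip_root_factorization[of "lag_poly th k n" "1 + \<kappa>"] assms(1) by blast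
  with degree_lag_poly that show ?thesis by metis
qed

lemma a_theta_fps_nth_bound:
  assumes "th \<in> Theta_star p q \<kappa>" and "\<kappa> > 0"
  shows "\<bar>fps_nth (a_theta_fps p th) n\<bar> \<le> 2 ^ p"
proof -
  obtain cs where cs: "lag_poly th 0 p = recip_root_poly cs" "\<forall>c\<in>set cs. norm c \<le> 1 / (1 + \<kappa>)"
      "length cs \<le> p"
    using lag_poly_recip_root_factorization[of th 0 p \<kappa>] assms
    by (auto simp: Theta_star_def poly_lag_poly_a_theta)
  have "\<forall>c\<in>set cs. norm c \<le> 1"
    using cs(2) assms(2) by (auto intro: order_trans[of _ "1 / (1 + \<kappa>)"])
  have "\<bar>fps_nth (a_theta_fps p th) n\<bar> = norm (coeff (lag_poly th 0 p) n)"
    by (metis complex_fps_a_theta_fps complex_fps_nth fps_of_poly_nth norm_of_real)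
  also have "\<dots> \<le> 2 ^ length cs"
    unfolding cs(1) by (rule norm_coeff_recip_root_poly_le) fact
  also have "\<dots> \<le> 2 ^ p" using cs(3) by (intro power_increasing) auto
  finally show ?thesis .
qed

lemma inverse_b_theta_fps_nth_bound:
  assumes "th \<in> Theta_star p q \<kappa>" and "\<kappa> > 0"
  shows "\<bar>fps_nth (inverse (b_theta_fps p q th)) n\<bar> \<le> (real n + 1) ^ q * (1 / (1 + \<kappa>)) ^ n"
proof -
  obtain cs where cs: "lag_poly th p q = recip_root_poly cs" "\<forall>c\<in>set cs. norm c \<le> 1 / (1 + \<kappa>)"
      "length cs \<le> q"
    using lag_poly_recip_root_factorization[of th p q \<kappa>] assms
    by (auto simp: Theta_star_def poly_lag_poly_b_theta)
  have "fps_nth (b_theta_fps p q th) 0 \<noteq> 0" by (simp add: b_theta_fps_def)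
  then have "complex_fps (inverse (b_theta_fps p q th)) = inverse (fps_of_poly (recip_root_poly cs))"
    by (simp add: complex_fps_inverse complex_fps_b_theta_fps cs(1))
  then have "\<bar>fps_nth (inverse (b_theta_fps p q th)) n\<bar>
      = norm (fps_nth (inverse (fps_of_poly (recip_root_poly cs))) n)"
    by (metis complex_fps_nth norm_of_real)
  also have "\<dots> \<le> (real n + 1) ^ length cs * (1 / (1 + \<kappa>)) ^ n"
    using cs(2) assms(2) by (intro norm_inverse_recip_root_poly_nth_le) auto
  also have "\<dots> \<le> (real n + 1) ^ q * (1 / (1 + \<kappa>)) ^ n"
    using cs(3) assms(2) by (intro mult_right_mono power_increasing) auto
  finally show ?thesis .
qed

text \<open>Multiplying by a power series with summable \<open>(k + 1)\<^sup>2\<close>-weighted coefficients preserves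
  a polynomial decay rate of order at most 2, since \<open>n + 1 \<le> (i + 1) (n - i + 1)\<close>.\<close>
lemma fps_mult_nth_decay:
  fixes f g :: "real fps"
  assumes f: "\<And>k. \<bar>fps_nth f k\<bar> \<le> G k" and G: "\<And>k. 0 \<le> G k"
    and G_summable: "summable (\<lambda>k. G k * (real k + 1)^2)"
    and g: "\<And>n. \<bar>fps_nth g n\<bar> \<le> H * (real n + 1) powr (-s)" and s: "0 \<le> s" "s \<le> 2"
  shows "\<bar>fps_nth (f * g) n\<bar> \<le> (\<Sum>k. G k * (real k + 1)^2) * H * (real n + 1) powr (-s)"
proof -
  have H: "0 \<le> H" using g[of 0] by simp
  have shifted: "(real (n - i) + 1) powr (-s) \<le> (real i + 1)^2 * (real n + 1) powr (-s)"
    if "i \<le> n" for i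
  proof -
    have "real n + 1 \<le> (real i + 1) * (real (n - i) + 1)"
      using that by (simp add: of_nat_diff algebra_simps mult_left_mono)
    then have "(real n + 1) powr s \<le> (real i + 1) powr s * (real (n - i) + 1) powr s"
      using s by (simp add: powr_mult[symmetric] powr_mono2)
    also have "\<dots> \<le> (real i + 1) powr 2 * (real (n - i) + 1) powr s"
      using s by (intro mult_right_mono powr_mono) auto
    finally show ?thesis
      by (simp add: powr_minus powr_realpow divide_simps mult.commute)
  qed
  have "\<bar>fps_nth (f * g) n\<bar> \<le> (\<Sum>i=0..n. \<bar>fps_nth f i * fps_nth g (n - i)\<bar>)"
    unfolding fps_mult_nth by (rule sum_abs)
  also have "\<dots> \<le> (\<Sum>i=0..n. G i * (H * ((real i + 1)^2 * (real n + 1) powr (-s))))"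
  proof (rule sum_mono)
    fix i assume "i \<in> {0..n}"
    then have "\<bar>fps_nth g (n - i)\<bar> \<le> H * ((real i + 1)^2 * (real n + 1) powr (-s))"
      using g[of "n - i"] shifted[of i] H by (meson atLeastAtMost_iff mult_left_mono order_trans)
    then show "\<bar>fps_nth f i * fps_nth g (n - i)\<bar> \<le> G i * (H * ((real i + 1)^2 * (real n + 1) powr (-s)))"
      using f[of i] G[of i] by (simp add: abs_mult mult_mono)
  qed
  also have "\<dots> = (\<Sum>i=0..n. G i * (real i + 1)^2) * H * (real n + 1) powr (-s)"
    by (simp add: sum_distrib_left sum_distrib_right mult_ac)
  also have "\<dots> \<le> (\<Sum>k. G k * (real k + 1)^2) * H * (real n + 1) powr (-s)"
    using H G by (intro mult_right_mono sum_le_suminf[OF G_summable]) auto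
  finally show ?thesis .
qed

lemma summable_poly_times_geometric:
  fixes \<rho> :: real
  assumes "0 < \<rho>" "\<rho> < 1"
  shows "summable (\<lambda>k. (real k + 1) ^ m * \<rho> ^ k)"
proof (rule summable_comparison_test_bigo)
  show "summable (\<lambda>k. norm (1 / real k ^ 2))"
    using inverse_power_summable[of 2, where 'a = real] by (simp add: divide_inverse)
  show "(\<lambda>k. (real k + 1) ^ m * \<rho> ^ k) \<in> O(\<lambda>k. 1 / real k ^ 2)"
    using assms by real_asymp
qed

lemma gamma_coef_uniform_decay:
  assumes "\<kappa> > 0" "0 < d1" "d2 < 1"
  obtains C where "\<And>\<theta> n. \<theta> \<in> Theta_kappa p q \<kappa> d1 d2 \<Longrightarrow>
    \<bar>gamma_coef p q \<theta> n\<bar> \<le> C * (real n + 1) powr (-(1 + d1))"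
proof -
  define \<rho> where "\<rho> = 1 / (1 + \<kappa>)"
  have \<rho>: "0 < \<rho>" "\<rho> < 1" using assms(1) by (auto simp: \<rho>_def)
  define KA where "KA = (\<Sum>k. (if k \<le> p then 2 ^ p else 0) * (real k + 1)^2 :: real)"
  define KB where "KB = (\<Sum>k. (real k + 1)^q * \<rho>^k * (real k + 1)^2)"
  have "\<bar>gamma_coef p q \<theta> n\<bar> \<le> KB * (KA * 4) * (real n + 1) powr (-(1 + d1))"
    if "\<theta> \<in> Theta_kappa p q \<kappa> d1 d2" for \<theta> n
  proof -
    obtain th d where "\<theta> = (th, d)" by fastforce
    with that have \<theta>: "\<theta> = (th, d)" "th \<in> Theta_star p q \<kappa>" "d1 \<le> d" "d \<le> d2"
      by (auto simp: Theta_kappa_def)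
    have s: "0 \<le> 1 + d1" "1 + d1 \<le> 2" using assms \<theta> by auto
    have AF: "\<bar>fps_nth (a_theta_fps p th * frac_fps d) m\<bar> \<le> KA * 4 * (real m + 1) powr (-(1 + d1))"
      for m unfolding KA_def
    proof (rule fps_mult_nth_decay)
      show "\<bar>fps_nth (a_theta_fps p th) k\<bar> \<le> (if k \<le> p then 2 ^ p else 0)" for k
        using a_theta_fps_nth_bound[OF \<theta>(2) assms(1), of k] by (auto simp: a_theta_fps_def)
      show "summable (\<lambda>k. (if k \<le> p then (2::real) ^ p else 0) * (real k + 1)^2)"
        by (rule summable_finite[of "{..p}"]) auto
      show "\<bar>fps_nth (frac_fps d) k\<bar> \<le> 4 * (real k + 1) powr (-(1 + d1))" for k
        unfolding frac_fps_def using frac_coef_decay[of d1 d k] assms \<theta> by simp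
    qed (use s in auto)
    have "gamma_coef p q \<theta> n = fps_nth (inverse (b_theta_fps p q th) * (a_theta_fps p th * frac_fps d)) n"
      by (simp add: gamma_coef_def \<theta>(1) mult.assoc)
    also have "\<bar>\<dots>\<bar> \<le> KB * (KA * 4) * (real n + 1) powr (-(1 + d1))"
      unfolding KB_def
    proof (rule fps_mult_nth_decay)
      show "\<bar>fps_nth (inverse (b_theta_fps p q th)) k\<bar> \<le> (real k + 1)^q * \<rho>^k" for k
        unfolding \<rho>_def by (rule inverse_b_theta_fps_nth_bound[OF \<theta>(2) assms(1)])
      have "summable (\<lambda>k. (real k + 1)^(q + 2) * \<rho>^k)"
        using \<rho> by (rule summable_poly_times_geometric)
      then show "summable (\<lambda>k. (real k + 1)^q * \<rho>^k * (real k + 1)^2)"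
        by (simp add: power_add power2_eq_square mult_ac)
    qed (use s \<rho> AF in auto)
    finally show ?thesis .
  qed
  then show thesis using that by blast
qed

lemma (in prob_space) nn_integral_abs_le_second_moment:
  fixes f :: "'a \<Rightarrow> real"
  assumes "integrable M (\<lambda>\<omega>. (f \<omega>)\<^sup>2)"
  shows "(\<integral>\<^sup>+\<omega>. ennreal \<bar>f \<omega>\<bar> \<partial>M) \<le> ennreal (expectation (\<lambda>\<omega>. (f \<omega>)\<^sup>2) + 1)"
proof -
  have "\<bar>x\<bar> \<le> x\<^sup>2 + 1" for x :: real
    using zero_le_power2[of "\<bar>x\<bar> - 1"] by (simp add: power2_diff)
  then have "(\<integral>\<^sup>+\<omega>. ennreal \<bar>f \<omega>\<bar> \<partial>M) \<le> (\<integral>\<^sup>+\<omega>. ennreal ((f \<omega>)\<^sup>2 + 1) \<partial>M)"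
    by (intro nn_integral_mono ennreal_leI)
  also have "\<dots> = ennreal (expectation (\<lambda>\<omega>. (f \<omega>)\<^sup>2 + 1))"
    using assms by (intro nn_integral_eq_integral) auto
  also have "expectation (\<lambda>\<omega>. (f \<omega>)\<^sup>2 + 1) = expectation (\<lambda>\<omega>. (f \<omega>)\<^sup>2) + 1"
    using assms by (simp add: prob_space)
  finally show ?thesis .
qed

lemma AE_summable_weighted_abs:
  fixes Y :: "nat \<Rightarrow> 'a \<Rightarrow> real"
  assumes Y: "\<And>m. Y m \<in> borel_measurable M"
    and Y_L1: "\<And>m. (\<integral>\<^sup>+\<omega>. ennreal \<bar>Y m \<omega>\<bar> \<partial>M) \<le> ennreal B"
    and c: "\<And>m. 0 \<le> c m" "summable c"
  shows "AE \<omega> in M. summable (\<lambda>m. c m * \<bar>Y m \<omega>\<bar>)"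
proof -
  note Y[measurable]
  define Z where "Z \<omega> = (\<Sum>m. ennreal (c m * \<bar>Y m \<omega>\<bar>))" for \<omega>
  have Z_meas: "Z \<in> borel_measurable M"
    unfolding Z_def by (intro borel_measurable_suminf_order) measurable
  have "(\<integral>\<^sup>+\<omega>. Z \<omega> \<partial>M) = (\<Sum>m. \<integral>\<^sup>+\<omega>. ennreal (c m) * ennreal \<bar>Y m \<omega>\<bar> \<partial>M)"
    unfolding Z_def using c by (subst nn_integral_suminf) (auto simp: ennreal_mult)
  also have "\<dots> = (\<Sum>m. ennreal (c m) * (\<integral>\<^sup>+\<omega>. ennreal \<bar>Y m \<omega>\<bar> \<partial>M))"
    by (subst nn_integral_cmult) auto
  also have "\<dots> \<le> (\<Sum>m. ennreal (c m) * ennreal B)"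
    by (intro suminf_le summableI mult_left_mono Y_L1) auto
  also have "\<dots> = (\<Sum>m. ennreal B * ennreal (c m))"
    by (simp add: mult.commute)
  also have "\<dots> = ennreal B * ennreal (suminf c)"
    using c by (simp add: suminf_ennreal2)
  also have "\<dots> < \<infinity>" by (simp add: ennreal_mult_less_top)
  finally have "AE \<omega> in M. Z \<omega> \<noteq> \<infinity>"
    by (intro nn_integral_noteq_infinite[OF Z_meas]) auto
  then show ?thesis
    by eventually_elim (use c in \<open>auto intro: summable_suminf_not_top simp: Z_def\<close>)
qed

text \<open>Tannery's theorem: the terms are dominated by the summable \<open>c m y m\<close>.\<close>
lemma series_tail_tendsto_zero:
  fixes c y :: "nat \<Rightarrow> real"
  assumes c: "decseq c" "c \<longlonglongrightarrow> 0" and y: "\<And>m. 0 \<le> y m" "summable (\<lambda>m. c m * y m)"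
  shows "(\<lambda>t. \<Sum>m. c (m + t) * y m) \<longlonglongrightarrow> 0"
proof -
  have c_nonneg: "0 \<le> c i" for i using decseq_ge[OF c] .
  have c_shift: "c (m + t) \<le> c m" for m t using decseqD[OF c(1)] by simp
  have "(\<lambda>t. \<Sum>m. c (m + t) * y m) \<longlonglongrightarrow> (\<Sum>m. 0)"
  proof (rule tannerys_theorem[of "\<lambda>m t. c (m + t) * y m" "\<lambda>_. 0" _ "\<lambda>m. c m * y m",
        THEN conjunct2, THEN conjunct2])
    show "(\<lambda>t. c (m + t) * y m) \<longlonglongrightarrow> 0" for m
      using tendsto_mult_left_zero[OF LIMSEQ_ignore_initial_segment[OF c(2), of m]]
      by (simp add: add.commute)
    show "\<forall>\<^sub>F (m, t) in at_top \<times>\<^sub>F sequentially. norm (c (m + t) * y m) \<le> c m * y m"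
      using c_nonneg c_shift y(1) by (intro always_eventually) (auto simp: abs_mult mult_right_mono)
  qed (use y(2) in simp_all)
  then show ?thesis by simp
qed

lemma abs_suminf_minus_partial_le:
  fixes g c :: "nat \<Rightarrow> real" and x :: "int \<Rightarrow> real"
  assumes g: "\<And>i. \<bar>g i\<bar> \<le> c i" and c: "summable (\<lambda>m. c (m + t) * \<bar>x (- int m)\<bar>)"
  shows "\<bar>(\<Sum>i. g i * x (int t - int i)) - (\<Sum>i<t. g i * x (int t - int i))\<bar>
           \<le> (\<Sum>m. c (m + t) * \<bar>x (- int m)\<bar>)"
proof -
  define f where "f i = g i * x (int t - int i)" for i
  have f_le: "\<bar>f (m + t)\<bar> \<le> c (m + t) * \<bar>x (- int m)\<bar>" for m
    unfolding f_def using g[of "m + t"] by (simp add: abs_mult mult_right_mono)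
  have abs_summable: "summable (\<lambda>m. \<bar>f (m + t)\<bar>)"
    by (rule summable_comparison_test'[OF c]) (use f_le in simp)
  then have "summable f"
    using summable_rabs_cancel[OF abs_summable] by simp
  then have "(\<Sum>i. f i) - (\<Sum>i<t. f i) = (\<Sum>m. f (m + t))"
    by (simp add: suminf_split_initial_segment[of f t])
  also have "\<bar>\<dots>\<bar> \<le> (\<Sum>m. \<bar>f (m + t)\<bar>)" by (rule summable_rabs[OF abs_summable])
  also have "\<dots> \<le> (\<Sum>m. c (m + t) * \<bar>x (- int m)\<bar>)" by (rule suminf_le[OF f_le abs_summable c])
  finally show ?thesis unfolding f_def .
qed

lemma AE_SUP_series_tail_tendsto_zero:
  fixes M :: "'w measure" and X :: "int \<Rightarrow> 'w \<Rightarrow> real" and \<gamma> :: "'t \<Rightarrow> nat \<Rightarrow> real"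
  assumes X: "\<And>t. X t \<in> borel_measurable M" "\<And>t. (\<integral>\<^sup>+\<omega>. ennreal \<bar>X t \<omega>\<bar> \<partial>M) \<le> ennreal B"
    and c: "decseq c" "summable c"
    and \<Theta>: "\<Theta> \<noteq> {}" "\<And>\<theta> i. \<theta> \<in> \<Theta> \<Longrightarrow> \<bar>\<gamma> \<theta> i\<bar> \<le> c i"
  shows "AE \<omega> in M. (\<lambda>t::nat. SUP \<theta>\<in>\<Theta>. ereal \<bar>(\<Sum>i. \<gamma> \<theta> i * X (int t - int i) \<omega>)
            - (\<Sum>i<t. \<gamma> \<theta> i * X (int t - int i) \<omega>)\<bar>) \<longlonglongrightarrow> 0"
proof -
  have c_lim: "c \<longlonglongrightarrow> 0" by (rule summable_LIMSEQ_zero[OF c(2)])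
  have c_nonneg: "0 \<le> c i" for i using decseq_ge[OF c(1) c_lim] .
  have "AE \<omega> in M. summable (\<lambda>m. c m * \<bar>X (- int m) \<omega>\<bar>)"
    using X c_nonneg c(2) by (intro AE_summable_weighted_abs) auto
  then show ?thesis
  proof eventually_elim
    case (elim \<omega>)
    define R where "R t = (\<Sum>m. c (m + t) * \<bar>X (- int m) \<omega>\<bar>)" for t
    have "R \<longlonglongrightarrow> 0"
      unfolding R_def using c(1) c_lim elim by (intro series_tail_tendsto_zero) auto
    have "summable (\<lambda>m. c (m + t) * \<bar>X (- int m) \<omega>\<bar>)" for t
    proof (rule summable_comparison_test'[OF elim])
      show "norm (c (m + t) * \<bar>X (- int m) \<omega>\<bar>) \<le> c m * \<bar>X (- int m) \<omega>\<bar>" for m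
        using decseqD[OF c(1), of m "m + t"] c_nonneg[of "m + t"] by (simp add: abs_mult mult_right_mono)
    qed
    then have bound: "\<bar>(\<Sum>i. \<gamma> \<theta> i * X (int t - int i) \<omega>) - (\<Sum>i<t. \<gamma> \<theta> i * X (int t - int i) \<omega>)\<bar>
        \<le> R t" if "\<theta> \<in> \<Theta>" for \<theta> t
      unfolding R_def using \<Theta>(2)[OF that] by (intro abs_suminf_minus_partial_le)
    obtain \<theta>\<^sub>0 where "\<theta>\<^sub>0 \<in> \<Theta>" using \<Theta>(1) by blast
    show ?case
    proof (rule tendsto_sandwich[of "\<lambda>_. 0" _ _ "\<lambda>t. ereal (R t)"])
      show "\<forall>\<^sub>F t in sequentially. 0 \<le> (SUP \<theta>\<in>\<Theta>. ereal \<bar>(\<Sum>i. \<gamma> \<theta> i * X (int t - int i) \<omega>)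
            - (\<Sum>i<t. \<gamma> \<theta> i * X (int t - int i) \<omega>)\<bar>)"
        by (intro always_eventually allI SUP_upper2[OF \<open>\<theta>\<^sub>0 \<in> \<Theta>\<close>]) simp
      show "\<forall>\<^sub>F t in sequentially. (SUP \<theta>\<in>\<Theta>. ereal \<bar>(\<Sum>i. \<gamma> \<theta> i * X (int t - int i) \<omega>)
            - (\<Sum>i<t. \<gamma> \<theta> i * X (int t - int i) \<omega>)\<bar>) \<le> ereal (R t)"
        using bound by (intro always_eventually allI SUP_least) simp
      show "(\<lambda>t. ereal (R t)) \<longlonglongrightarrow> 0"
        using \<open>R \<longlonglongrightarrow> 0\<close> by (simp add: zero_ereal_def)
    qed simp
  qed
qed

theorem proposition2:
  fixes M :: "'w measure" and X \<epsilon> :: "int \<Rightarrow> 'w \<Rightarrow> real"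
    and p q :: nat and a b :: "nat \<Rightarrow> real" and d0 \<sigma>2 \<kappa> d1 d2 :: real
  assumes "prob_space M"
    and eps_meas: "\<And>t. \<epsilon> t \<in> borel_measurable M"
    and eps_L2: "\<And>t. integrable M (\<lambda>\<omega>. (\<epsilon> t \<omega>)\<^sup>2)"
    and eps_mean: "\<And>t. prob_space.expectation M (\<epsilon> t) = 0"
    and eps_var: "\<And>t. prob_space.expectation M (\<lambda>\<omega>. (\<epsilon> t \<omega>)\<^sup>2) = \<sigma>2"
    and sigma_pos: "\<sigma>2 > 0"
    and eps_uncorr: "\<And>s t. s \<noteq> t \<Longrightarrow> prob_space.expectation M (\<lambda>\<omega>. \<epsilon> s \<omega> * \<epsilon> t \<omega>) = 0"
    and d0: "0 < d0" "d0 < 1/2"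
    and a_roots: "\<And>z::complex. norm z \<le> 1 \<Longrightarrow> 1 - (\<Sum>i=1..p. complex_of_real (a i) * z ^ i) \<noteq> 0"
    and b_roots: "\<And>z::complex. norm z \<le> 1 \<Longrightarrow> 1 - (\<Sum>i=1..q. complex_of_real (b i) * z ^ i) \<noteq> 0"
    and no_common: "\<not> (\<exists>z::complex. 1 - (\<Sum>i=1..p. complex_of_real (a i) * z ^ i) = 0
                                  \<and> 1 - (\<Sum>i=1..q. complex_of_real (b i) * z ^ i) = 0)"
    and X_meas: "\<And>t. X t \<in> borel_measurable M"
    and X_L2: "\<And>t. integrable M (\<lambda>\<omega>. (X t \<omega>)\<^sup>2)"
    and X_mean: "\<And>t. prob_space.expectation M (X t) = prob_space.expectation M (X 0)"
    and X_cov: "\<And>t h. prob_space.expectation M (\<lambda>\<omega>. X (t + h) \<omega> * X t \<omega>)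
                      = prob_space.expectation M (\<lambda>\<omega>. X h \<omega> * X 0 \<omega>)"
    and model: "\<And>t. AE \<omega> in M.
        (\<Sum>j. frac_coef d0 j * X (t - int j) \<omega>)
          - (\<Sum>i=1..p. a i * (\<Sum>j. frac_coef d0 j * X (t - int i - int j) \<omega>))
        = \<epsilon> t \<omega> - (\<Sum>i=1..q. b i * \<epsilon> (t - int i) \<omega>)"
    and kappa: "\<kappa> > 0"
    and d12: "0 < d1" "d1 \<le> d2" "d2 < 1/2"
  shows "AE \<omega> in M.
     (\<lambda>t::nat. SUP \<theta>\<in>Theta_kappa p q \<kappa> d1 d2.
         ereal \<bar>eps_theta p q X (int t) \<theta> \<omega> - eps_tilde p q X t \<theta> \<omega>\<bar>) \<longlonglongrightarrow> 0"
proof -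
  txt \<open>Only the second-order stationarity of \<open>X\<close> enters.\<close>
  interpret prob_space M by fact
  have "d2 < 1" using d12 by simp
  then obtain C where C: "\<And>\<theta> n. \<theta> \<in> Theta_kappa p q \<kappa> d1 d2 \<Longrightarrow>
      \<bar>gamma_coef p q \<theta> n\<bar> \<le> C * (real n + 1) powr (-(1 + d1))"
    using gamma_coef_uniform_decay[OF kappa d12(1), of d2 p q] by blast
  have "a_theta p (replicate (p + q) 0) z = 1" "b_theta p q (replicate (p + q) 0) z = 1" for z
    by (auto simp: a_theta_def b_theta_def intro!: sum.neutral)
  then have zero_arma_param: "(replicate (p + q) 0, d1) \<in> Theta_kappa p q \<kappa> d1 d2"
    using d12 by (simp add: Theta_kappa_def Theta_star_def)
  then have "0 \<le> C" using C[of _ 0] by fastforce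
  then have c_decseq: "decseq (\<lambda>n. C * (real n + 1) powr (-(1 + d1)))"
    using d12 by (intro decseq_SucI mult_left_mono powr_mono2') auto
  have c_summable: "summable (\<lambda>n. C * (real n + 1) powr (-(1 + d1)))"
    using d12 summable_real_powr_iff[of "-(1 + d1)"] summable_iff_shift[of "\<lambda>n. real n powr (-(1 + d1))" 1]
    by (intro summable_mult) (simp add: add.commute)
  have X_L1: "(\<integral>\<^sup>+\<omega>. ennreal \<bar>X t \<omega>\<bar> \<partial>M) \<le> ennreal (expectation (\<lambda>\<omega>. (X 0 \<omega>)\<^sup>2) + 1)" for t
    using nn_integral_abs_le_second_moment[OF X_L2[of t]] X_cov[of t 0] by (simp add: power2_eq_square)
  show ?thesis
    unfolding eps_theta_def eps_tilde_def
    by (rule AE_SUP_series_tail_tendsto_zero[OF X_meas X_L1 c_decseq c_summable])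
      (use zero_arma_param C in auto)
qed

end
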